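(* Let $(X,P,o)$ be a generalized parametric metric space such that $P$ satisfies (P5) and $o$ is continuous. Then every open ball $B(a,\alpha,t)$ ($a\in X$, $\alpha>0$, $t>0$) belongs to $\tau_P$.
   Context: A binary operation $o:[0,\infty)\times[0,\infty)\to[0,\infty)$ (written $\alpha\, o\, \beta$) is assumed to satisfy, for all $\alpha,\beta,\gamma\in[0,\infty)$: (a) $\alpha\, o\, 0=\alpha$; (b) $\alpha\le\beta\implies \alpha\, o\,\gamma\le\beta\, o\,\gamma$; (c) $\alpha\, o\,\gamma=\gamma\, o\,\alpha$; (d) $\alpha\, o\,(\beta\, o\,\gamma)=(\alpha\, o\,\beta)\, o\,\gamma$. It is continuous if whenever $\alpha_n\to\alpha$ and $\beta_n\to\beta$ in $[0,\infty)$ we have $\alpha_n\, o\,\beta_n\to\alpha\, o\,\beta$. A generalized parametric metric on a nonempty set $X$ is a function $P:X\times X\times(0,\infty)\to[0,\infty)$ such that: (P1) $P(a,b,t)=0$ for all $t>0$ if and only if $a=b$; (P2) $P(a,b,t)=P(b,a,t)$ for all $a,b\in X$, $t>0$; (P3) $P(a,b,s+t)\le P(a,x,s)\, o\, P(b,x,t)$ for all $s,t>0$ and $a,b,x\in X$. The triple $(X,P,o)$ is a generalized parametric metric space. Condition (P5): for all $a,b\in X$, the map $t\mapsto P(a,b,t)$ is continuous on $(0,\infty)$. Open ball: $B(a,\alpha,t)=\{b\in X: P(a,b,t)<\alpha\}$. $\tau_P$ is the topology consisting of all $A\subseteq X$ such that for every $a\in A$ there exist $\alpha>0,t>0$ with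 $B(a,\alpha,t)\subseteq A$. *)

theory Defs
  imports "HOL-Analysis.Analysis"
begin

text \<open>A binary operation o on [0,oo), represented as a real function whose
behaviour matters only on nonnegative arguments.\<close>
definition gen_op :: "(real \<Rightarrow> real \<Rightarrow> real) \<Rightarrow> bool" where
  "gen_op opr \<longleftrightarrow>
     (\<forall>a\<ge>0. \<forall>b\<ge>0. opr a b \<ge> 0) \<and>
     (\<forall>a\<ge>0. opr a 0 = a) \<and>
     (\<forall>a\<ge>0. \<forall>b\<ge>0. \<forall>c\<ge>0. a \<le> b \<longrightarrow> opr a c \<le> opr b c) \<and>
     (\<forall>a\<ge>0. \<forall>c\<ge>0. opr a c = opr c a) \<and>
     (\<forall>a\<ge>0. \<forall>b\<ge>0. \<forall>c\<ge>0. opr a (opr b c) = opr (opr a b) c)"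

definition op_continuous :: "(real \<Rightarrow> real \<Rightarrow> real) \<Rightarrow> bool" where
  "op_continuous opr \<longleftrightarrow>
     (\<forall>an bn a b. (\<forall>n. an n \<ge> 0) \<longrightarrow> (\<forall>n. bn n \<ge> 0) \<longrightarrow> a \<ge> 0 \<longrightarrow> b \<ge> 0 \<longrightarrow>
        an \<longlonglongrightarrow> a \<longrightarrow> bn \<longlonglongrightarrow> b \<longrightarrow> (\<lambda>n. opr (an n) (bn n)) \<longlonglongrightarrow> opr a b)"

text \<open>Generalized parametric metric on X; only values at t > 0 matter.\<close>
definition gen_parametric_metric ::
  "'a set \<Rightarrow> ('a \<Rightarrow> 'a \<Rightarrow> real \<Rightarrow> real) \<Rightarrow> (real \<Rightarrow> real \<Rightarrow> real) \<Rightarrow> bool" where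
  "gen_parametric_metric X P opr \<longleftrightarrow>
     X \<noteq> {} \<and> gen_op opr \<and>
     (\<forall>a\<in>X. \<forall>b\<in>X. \<forall>t>0. P a b t \<ge> 0) \<and>
     (\<forall>a\<in>X. \<forall>b\<in>X. (\<forall>t>0. P a b t = 0) \<longleftrightarrow> a = b) \<and>
     (\<forall>a\<in>X. \<forall>b\<in>X. \<forall>t>0. P a b t = P b a t) \<and>
     (\<forall>a\<in>X. \<forall>b\<in>X. \<forall>x\<in>X. \<forall>s>0. \<forall>t>0. P a b (s + t) \<le> opr (P a x s) (P b x t))"

definition P5 :: "'a set \<Rightarrow> ('a \<Rightarrow> 'a \<Rightarrow> real \<Rightarrow> real) \<Rightarrow> bool" where
  "P5 X P \<longleftrightarrow> (\<forall>a\<in>X. \<forall>b\<in>X. continuous_on {0<..} (P a b))"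

definition pball :: "'a set \<Rightarrow> ('a \<Rightarrow> 'a \<Rightarrow> real \<Rightarrow> real) \<Rightarrow> 'a \<Rightarrow> real \<Rightarrow> real \<Rightarrow> 'a set" where
  "pball X P a \<alpha> t = {b\<in>X. P a b t < \<alpha>}"

definition tauP :: "'a set \<Rightarrow> ('a \<Rightarrow> 'a \<Rightarrow> real \<Rightarrow> real) \<Rightarrow> 'a set set" where
  "tauP X P = {A. A \<subseteq> X \<and> (\<forall>a\<in>A. \<exists>\<alpha>>0. \<exists>t>0. pball X P a \<alpha> t \<subseteq> A)}"

end

theory Submission
  imports Defs
begin

text \<open>Given b in B(a,\<alpha>,t), continuity of P a b lets us shrink the parameter to some s < t with
  P a b s < \<alpha> still; continuity of o at 0 then gives \<beta> > 0 with (P a b s) o \<beta> < \<alpha>, and the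
  triangle inequality (P3) with parameters s and t - s shows B(b,\<beta>,t - s) \<subseteq> B(a,\<alpha>,t).\<close>

lemma continuous_on_less_at_left:
  fixes f :: "real \<Rightarrow> real"
  assumes "continuous_on {0<..} f" and "0 < t" and "f t < c"
  obtains s where "0 < s" and "s < t" and "f s < c"
proof -
  have "isCont f t"
    using assms(1,2) by (simp add: continuous_on_eq_continuous_at)
  then have "(f \<longlongrightarrow> f t) (at_left t)"
    by (simp add: isCont_def filterlim_at_split)
  then have "eventually (\<lambda>s. f s < c) (at_left t)"
    using assms(3) by (rule order_tendstoD)
  moreover have "eventually (\<lambda>s. s \<in> {0<..<t}) (at_left t)"
    using assms(2) by (rule eventually_at_left_real)
  ultimately have "eventually (\<lambda>s. 0 < s \<and> s < t \<and> f s < c) (at_left t)"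
    by eventually_elim auto
  then obtain s where "0 < s \<and> s < t \<and> f s < c"
    using eventually_happens' trivial_limit_at_left_real by blast
  with that show ?thesis by blast
qed

lemma gen_opD:
  assumes "gen_op opr"
  shows gen_op_right_zero: "0 \<le> a \<Longrightarrow> opr a 0 = a"
    and gen_op_commute: "\<lbrakk>0 \<le> a; 0 \<le> b\<rbrakk> \<Longrightarrow> opr a b = opr b a"
    and gen_op_mono_left: "\<lbrakk>0 \<le> a; 0 \<le> b; 0 \<le> c; a \<le> b\<rbrakk> \<Longrightarrow> opr a c \<le> opr b c"
  using assms unfolding gen_op_def by meson+

lemma gen_op_mono_right:
  assumes "gen_op opr" and "0 \<le> x" and "0 \<le> y" and "y \<le> z"
  shows "opr x y \<le> opr x z"
proof -
  have "0 \<le> z"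
    using assms(3,4) by (rule order_trans)
  have "opr x y = opr y x"
    using assms(2,3) by (rule gen_op_commute[OF assms(1)])
  also have "\<dots> \<le> opr z x"
    using assms(3) \<open>0 \<le> z\<close> assms(2,4) by (rule gen_op_mono_left[OF assms(1)])
  also have "\<dots> = opr x z"
    using \<open>0 \<le> z\<close> assms(2) by (rule gen_op_commute[OF assms(1)])
  finally show ?thesis .
qed

lemma op_continuous_less_at_zero:
  assumes "op_continuous opr" and "gen_op opr" and "0 \<le> x" and "x < c"
  obtains \<beta> where "0 < \<beta>" and "opr x \<beta> < c"
proof -
  have inverse_nonneg: "0 \<le> inverse (real (Suc n))" for n
    by simp
  have "(\<lambda>n. opr x (inverse (real (Suc n)))) \<longlonglongrightarrow> opr x 0"
    by (rule assms(1)[unfolded op_continuous_def, rule_format, of "\<lambda>_. x" "\<lambda>n. inverse (real (Suc n))",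
        OF assms(3) inverse_nonneg assms(3) order_refl tendsto_const LIMSEQ_inverse_real_of_nat])
  then have "(\<lambda>n. opr x (inverse (real (Suc n)))) \<longlonglongrightarrow> x"
    by (simp only: gen_op_right_zero[OF assms(2,3)])
  then have "eventually (\<lambda>n. opr x (inverse (real (Suc n))) < c) sequentially"
    using assms(4) by (rule order_tendstoD)
  then obtain n where "opr x (inverse (real (Suc n))) < c"
    by (auto simp: eventually_sequentially)
  moreover have "0 < inverse (real (Suc n))"
    by simp
  ultimately show ?thesis
    by (rule that[rotated])
qed

lemma gen_parametric_metricD:
  assumes "gen_parametric_metric X P opr"
  shows gen_parametric_metric_gen_op: "gen_op opr"
    and gen_parametric_metric_nonneg: "\<lbrakk>a \<in> X; b \<in> X; 0 < t\<rbrakk> \<Longrightarrow> 0 \<le> P a b t"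
    and gen_parametric_metric_sym: "\<lbrakk>a \<in> X; b \<in> X; 0 < t\<rbrakk> \<Longrightarrow> P a b t = P b a t"
    and gen_parametric_metric_triangle:
      "\<lbrakk>a \<in> X; b \<in> X; x \<in> X; 0 < s; 0 < t\<rbrakk> \<Longrightarrow> P a b (s + t) \<le> opr (P a x s) (P b x t)"
  using assms unfolding gen_parametric_metric_def by meson+

lemma pball_subset_pball:
  assumes gpm: "gen_parametric_metric X P opr"
    and "a \<in> X" and "b \<in> X" and "0 < s" and "0 < r"
    and less: "opr (P a b s) \<beta> < \<alpha>"
  shows "pball X P b \<beta> r \<subseteq> pball X P a \<alpha> (s + r)"
proof
  fix c assume "c \<in> pball X P b \<beta> r"
  then have "c \<in> X" and "P b c r < \<beta>"
    by (auto simp: pball_def)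
  have "P a c (s + r) \<le> opr (P a b s) (P c b r)"
    using gen_parametric_metric_triangle[OF gpm] assms(2,3,4,5) \<open>c \<in> X\<close> by blast
  also have "\<dots> \<le> opr (P a b s) \<beta>"
  proof (rule gen_op_mono_right[OF gen_parametric_metric_gen_op[OF gpm]])
    show "0 \<le> P a b s" and "0 \<le> P c b r"
      using gen_parametric_metric_nonneg[OF gpm] assms(2,3,4,5) \<open>c \<in> X\<close> by blast+
    show "P c b r \<le> \<beta>"
      using gen_parametric_metric_sym[OF gpm] assms(3,5) \<open>c \<in> X\<close> \<open>P b c r < \<beta>\<close> by force
  qed
  also have "\<dots> < \<alpha>"
    by (rule less)
  finally show "c \<in> pball X P a \<alpha> (s + r)"
    using \<open>c \<in> X\<close> by (simp add: pball_def)
qed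

lemma pball_contains_pball:
  assumes gpm: "gen_parametric_metric X P opr" and "P5 X P" and "op_continuous opr"
    and "a \<in> X" and "0 < t" and "b \<in> pball X P a \<alpha> t"
  obtains \<beta> r where "0 < \<beta>" and "0 < r" and "pball X P b \<beta> r \<subseteq> pball X P a \<alpha> t"
proof -
  from assms(6) have "b \<in> X" and "P a b t < \<alpha>"
    by (auto simp: pball_def)
  have "continuous_on {0<..} (P a b)"
    using assms(2,4) \<open>b \<in> X\<close> by (simp add: P5_def)
  then obtain s where "0 < s" "s < t" "P a b s < \<alpha>"
    using assms(5) \<open>P a b t < \<alpha>\<close> by (rule continuous_on_less_at_left)
  have "gen_op opr" and "0 \<le> P a b s"
    using gen_parametric_metricD[OF gpm] assms(4) \<open>b \<in> X\<close> \<open>0 < s\<close> by blast+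
  with assms(3) obtain \<beta> where "0 < \<beta>" "opr (P a b s) \<beta> < \<alpha>"
    using \<open>P a b s < \<alpha>\<close> by (rule op_continuous_less_at_zero)
  have "0 < t - s"
    using \<open>s < t\<close> by simp
  moreover have "pball X P b \<beta> (t - s) \<subseteq> pball X P a \<alpha> (s + (t - s))"
    using gpm assms(4) \<open>b \<in> X\<close> \<open>0 < s\<close> \<open>0 < t - s\<close> \<open>opr (P a b s) \<beta> < \<alpha>\<close>
    by (rule pball_subset_pball)
  ultimately show ?thesis
    using that[OF \<open>0 < \<beta>\<close> \<open>0 < t - s\<close>] by simp
qed

theorem mainTheorem2:
  fixes X :: "'a set" and P :: "'a \<Rightarrow> 'a \<Rightarrow> real \<Rightarrow> real" and opr :: "real \<Rightarrow> real \<Rightarrow> real"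
  assumes "gen_parametric_metric X P opr"
    and "P5 X P"
    and "op_continuous opr"
    and "a \<in> X" and "\<alpha> > 0" and "t > 0"
  shows "pball X P a \<alpha> t \<in> tauP X P"
proof -
  have "\<exists>\<beta>>0. \<exists>r>0. pball X P b \<beta> r \<subseteq> pball X P a \<alpha> t" if "b \<in> pball X P a \<alpha> t" for b
    using assms(1-4,6) that by (rule pball_contains_pball) blast
  moreover have "pball X P a \<alpha> t \<subseteq> X"
    by (auto simp: pball_def)
  ultimately show ?thesis
    unfolding tauP_def by blast
qed

end
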